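(* There exists $c>0$ such that for every even $n$, the number $a_n$ of squared walks of length $n$ satisfies $a_n\ge\mu^n e^{-c\sqrt n}$.
   Context: Work on $\mathbb Z^2$ with nearest-neighbour edges. A self-avoiding walk is a nearest-neighbour path $\gamma_0,\dots,\gamma_n$ visiting no vertex twice; $n$ is its length. $\mu=\lim_n c_n^{1/n}$ is the connective constant, $c_n$ being the number of $n$-step self-avoiding walks from the origin. A squared walk (of span $k$) of length $n$ is an $n$-step self-avoiding walk with $\gamma_0=(0,0)$, $\gamma_n=(k,k)$ and all its vertices in $[0,k]^2$, for some integer $k\ge0$; $a_n$ counts squared walks of length $n$ over all spans $k$. *)

theory Defs
  imports Complex_Main
begin

type_synonym pt = "int \<times> int"

definition adjacent :: "pt \<Rightarrow> pt \<Rightarrow> bool" where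
  "adjacent p q \<longleftrightarrow> \<bar>fst p - fst q\<bar> + \<bar>snd p - snd q\<bar> = 1"

definition saw :: "nat \<Rightarrow> pt list \<Rightarrow> bool" where
  "saw n w \<longleftrightarrow> length w = n + 1 \<and> w ! 0 = (0, 0) \<and> distinct w \<and>
     (\<forall>i<n. adjacent (w ! i) (w ! Suc i))"

definition c_num :: "nat \<Rightarrow> nat" where
  "c_num n = card {w. saw n w}"

definition conn_const :: real where
  "conn_const = lim (\<lambda>n. root n (real (c_num n)))"

definition squared_walk :: "nat \<Rightarrow> pt list \<Rightarrow> bool" where
  "squared_walk n w \<longleftrightarrow> saw n w \<and>
     (\<exists>k::int. k \<ge> 0 \<and> w ! n = (k, k) \<and>
        (\<forall>p\<in>set w. 0 \<le> fst p \<and> fst p \<le> k \<and> 0 \<le> snd p \<and> snd p \<le> k))"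

definition a_num :: "nat \<Rightarrow> nat" where
  "a_num n = card {w. squared_walk n w}"

end

theory Submission
  imports Defs "HOL-Library.Product_Plus"
begin

text \<open>
  The connective constant is the infimum of the c_n^(1/n) (Fekete), so
  mu^n \<le> c_n.  Following Hammersley and Welsh, a walk is repeatedly unfolded:
  the part after its last highest point is reflected upwards.  Every unfolding raises
  the maximal height by the current depth and strictly lowers the depth, so a walk is
  determined by the final walk, which ends at its maximal height, together with a
  partition into distinct parts; there are only exp(O(sqrt n)) of these.  Four
  unfoldings, interleaved with reversal and reflection in the diagonal, turn any walk
  into one from the lower left to the upper right corner of its bounding box.  The endpoint of such a corner walk takes at most (n+1)^2 values; for the most
  frequent endpoint (a, b), gluing a corner walk ending at (a, b) with a translated one
  ending at (b, a) produces a squared walk of length 2n, whence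
  a_2n \<ge> (c_n exp(-O(sqrt n)))^2.
\<close>

lemma submultiplicative_power_le:
  fixes f :: "nat \<Rightarrow> real"
  assumes "\<And>m n. f (m + n) \<le> f m * f n" "\<And>n. 0 \<le> f n"
  shows "f (k * q + r) \<le> f k ^ q * f r"
proof (induction q)
  case (Suc q)
  have "f (k * Suc q + r) \<le> f k * f (k * q + r)"
    using assms(1)[of k "k * q + r"] by (simp add: add.assoc)
  also have "\<dots> \<le> f k * (f k ^ q * f r)" using Suc assms(2) by (intro mult_left_mono) auto
  finally show ?case by (simp add: mult.assoc)
qed simp

lemma submultiplicative_root_le:
  fixes f :: "nat \<Rightarrow> real"
  assumes mult: "\<And>m n. f (m + n) \<le> f m * f n" and ge1: "\<And>n. 1 \<le> f n"
    and "1 \<le> k" "1 \<le> n"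
  shows "root n (f n) \<le> root k (f k) * root n (Max (f ` {..<k}))"
proof -
  define C where "C = Max (f ` {..<k})"
  define q r where "q = n div k" and "r = n mod k"
  have f0: "0 \<le> f i" for i using ge1[of i] by simp
  have "f r \<le> C" unfolding C_def r_def using \<open>1 \<le> k\<close> by (intro Max_ge) auto
  have "f n \<le> f k ^ q * f r"
    using submultiplicative_power_le[OF mult f0, of k q r] by (simp add: q_def r_def)
  also have "\<dots> \<le> root k (f k) ^ (k * q) * C"
    using \<open>f r \<le> C\<close> \<open>1 \<le> k\<close> f0 by (simp add: power_mult real_root_pow_pos2 mult_left_mono)
  also have "\<dots> \<le> root k (f k) ^ n * C"
    using ge1[of k] \<open>f r \<le> C\<close> f0[of r] \<open>1 \<le> k\<close>
    by (intro mult_right_mono power_increasing) (auto simp: q_def)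
  finally have "root n (f n) \<le> root n (root k (f k) ^ n * C)"
    using \<open>1 \<le> n\<close> by simp
  also have "\<dots> = root k (f k) * root n C"
    using \<open>1 \<le> n\<close> f0[of k] by (simp add: real_root_mult real_root_power_cancel real_root_ge_zero)
  finally show ?thesis unfolding C_def .
qed

lemma submultiplicative_root_tendsto_Inf:
  fixes f :: "nat \<Rightarrow> real"
  assumes mult: "\<And>m n. f (m + n) \<le> f m * f n" and ge1: "\<And>n. 1 \<le> f n"
  shows "(\<lambda>n. root n (f n)) \<longlonglongrightarrow> (INF n\<in>{1..}. root n (f n))"
proof (rule LIMSEQ_I)
  let ?g = "\<lambda>n. root n (f n)" let ?L = "INF n\<in>{1..}. root n (f n)"
  have g1: "1 \<le> n \<Longrightarrow> 1 \<le> ?g n" for n using ge1[of n] by simp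
  have L_le: "1 \<le> n \<Longrightarrow> ?L \<le> ?g n" for n
    using g1 by (intro cInf_lower bdd_belowI2[of _ 1]) auto
  fix e :: real assume e: "e > 0"
  obtain k where k: "1 \<le> k" "?g k < ?L + e / 2"
    using cInf_lessD[of "?g ` {1..}" "?L + e / 2"] e by auto
  define C where "C = Max (f ` {..<k})"
  have "1 \<le> C"
    unfolding C_def using k ge1[of 0] by (intro Max_ge_iff[THEN iffD2]) (auto simp: Suc_le_eq)
  then have "(\<lambda>n. root n C) \<longlonglongrightarrow> 1" by (intro LIMSEQ_root_const) simp
  moreover have "e / (2 * ?g k) > 0" using e g1[OF k(1)] by simp
  ultimately obtain N where N: "\<And>n. n \<ge> N \<Longrightarrow> root n C < 1 + e / (2 * ?g k)"
    by (metis (no_types, lifting) LIMSEQ_D abs_less_iff real_norm_def add.commute diff_less_eq)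
  show "\<exists>N. \<forall>n\<ge>N. norm (?g n - ?L) < e"
  proof (intro exI allI impI)
    fix n assume n: "n \<ge> max N 1"
    have "?g n \<le> ?g k * root n C"
      using submultiplicative_root_le[OF mult ge1 k(1), of n] n unfolding C_def by simp
    also have "\<dots> \<le> ?g k * (1 + e / (2 * ?g k))"
      using N[of n] n g1[OF k(1)] by (intro mult_left_mono) auto
    also have "\<dots> = ?g k + e / 2" using g1[OF k(1)] by (simp add: field_simps)
    finally show "norm (?g n - ?L) < e" using k L_le[of n] n by simp
  qed
qed

lemma exists_card_UN_le_card_mult:
  assumes "finite E" "E \<noteq> {}"
  shows "\<exists>e\<in>E. card (\<Union>e\<in>E. A e) \<le> card E * card (A e)"
proof -
  have "Max ((\<lambda>e. card (A e)) ` E) \<in> (\<lambda>e. card (A e)) ` E" using assms by (intro Max_in) auto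
  then obtain e where "e \<in> E" "card (A e) = Max ((\<lambda>e. card (A e)) ` E)" by auto
  then have bound: "card (A e') \<le> card (A e)" if "e' \<in> E" for e' using that assms(1) by simp
  have "card (\<Union>e\<in>E. A e) \<le> (\<Sum>e'\<in>E. card (A e'))" by (rule card_UN_le[OF assms(1)])
  also have "\<dots> \<le> card E * card (A e)"
    using sum_bounded_above[of E "\<lambda>e'. card (A e')" "card (A e)"] bound by simp
  finally show ?thesis using \<open>e \<in> E\<close> by blast
qed

lemma adjacent_sym: "adjacent p q \<Longrightarrow> adjacent q p"
  unfolding adjacent_def by linarith

lemma adjacent_add_left [simp]: "adjacent (a + p) (a + q) \<longleftrightarrow> adjacent p q"
  by (simp add: adjacent_def)

lemma adjacent_diff_right [simp]: "adjacent (p - a) (q - a) \<longleftrightarrow> adjacent p q"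
  by (simp add: adjacent_def)

lemma adjacent_diff_left [simp]: "adjacent (a - p) (a - q) \<longleftrightarrow> adjacent p q"
  by (simp add: adjacent_def abs_minus_commute)

lemma adjacent_swap [simp]: "adjacent (prod.swap p) (prod.swap q) \<longleftrightarrow> adjacent p q"
  by (simp add: adjacent_def add.commute)

lemma saw_iff_successively:
  "saw n w \<longleftrightarrow> length w = n + 1 \<and> w ! 0 = 0 \<and> distinct w \<and> successively adjacent w"
  unfolding saw_def successively_conv_nth zero_prod_def by auto

lemma saw_length: "saw n w \<Longrightarrow> length w = n + 1"
  by (simp add: saw_def)

lemma saw_nonempty: "saw n w \<Longrightarrow> w \<noteq> []"
  by (auto simp: saw_def)

lemma saw_eq_Cons: "saw n w \<Longrightarrow> w = 0 # tl w"
  by (cases w) (auto simp: saw_def zero_prod_def)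

lemma hd_saw: "saw n w \<Longrightarrow> hd w = 0"
  by (metis list.sel(1) saw_eq_Cons)

lemma saw_norm_le:
  assumes "saw n w" "i \<le> n"
  shows "\<bar>fst (w ! i)\<bar> + \<bar>snd (w ! i)\<bar> \<le> int i"
  using assms(2)
proof (induction i)
  case 0
  then show ?case using assms(1) by (simp add: saw_def)
next
  case (Suc i)
  then have "adjacent (w ! i) (w ! Suc i)" using assms(1) by (simp add: saw_def)
  then show ?case using Suc by (auto simp: adjacent_def)
qed

lemma finite_saw: "finite {w. saw n w}"
proof -
  let ?B = "{-int n..int n} \<times> {-int n..int n}"
  have "{w. saw n w} \<subseteq> {w. set w \<subseteq> ?B \<and> length w = n + 1}"
  proof clarify
    fix w assume w: "saw n w"
    have "p \<in> ?B" if p: "p \<in> set w" for p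
    proof -
      obtain i where "i \<le> n" "p = w ! i"
        using p saw_length[OF w] by (auto simp: in_set_conv_nth less_Suc_eq_le)
      then show ?thesis using saw_norm_le[OF w, of i] by (auto simp: mem_Times_iff)
    qed
    then show "set w \<subseteq> ?B \<and> length w = n + 1" using saw_length[OF w] by blast
  qed
  moreover have "finite {w. set w \<subseteq> ?B \<and> length w = n + 1}"
    by (rule finite_lists_length_eq) simp
  ultimately show ?thesis by (rule finite_subset)
qed

lemma finite_subset_saw: "A \<subseteq> {w. saw n w} \<Longrightarrow> finite A"
  by (rule finite_subset[OF _ finite_saw])

lemma saw_take_drop:
  assumes "saw (m + n) w"
  shows "saw m (take (m + 1) w)" and "saw n (map (\<lambda>p. p - w ! m) (drop m w))"
proof -
  have inj: "inj (\<lambda>p. p - w ! m)" by (rule injI) simp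
  show "saw m (take (m + 1) w)" using assms by (auto simp: saw_def)
  show "saw n (map (\<lambda>p. p - w ! m) (drop m w))"
    using assms by (auto simp: saw_def distinct_map inj_on_subset[OF inj] zero_prod_def)
qed

lemma c_num_add_le: "c_num (m + n) \<le> c_num m * c_num n"
proof -
  define cut :: "pt list \<Rightarrow> pt list \<times> pt list"
    where "cut w = (take (m + 1) w, map (\<lambda>p. p - w ! m) (drop m w))" for w
  have "inj_on cut {w. saw (m + n) w}"
  proof (rule inj_onI)
    fix w v assume "w \<in> {w. saw (m + n) w}" "v \<in> {w. saw (m + n) w}" and eq: "cut w = cut v"
    then have len: "length w = m + n + 1" "length v = m + n + 1" by (auto simp: saw_def)
    have take: "take (m + 1) w = take (m + 1) v" using eq by (simp add: cut_def)
    then have "w ! m = v ! m" using len by (metis less_add_one nth_take)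
    moreover have "map (\<lambda>p. p - w ! m) (drop m w) = map (\<lambda>p. p - v ! m) (drop m v)"
      using eq by (simp add: cut_def)
    ultimately have "drop m w = drop m v" by (simp add: inj_map_eq_map inj_def)
    moreover have "take m w = take m v" using take by (metis le_add1 min.absorb1 take_take)
    ultimately show "w = v" by (metis append_take_drop_id)
  qed
  moreover have "cut ` {w. saw (m + n) w} \<subseteq> {w. saw m w} \<times> {w. saw n w}"
    using saw_take_drop by (auto simp: cut_def)
  ultimately have "c_num (m + n) \<le> card ({w. saw m w} \<times> {w. saw n w})"
    unfolding c_num_def by (intro card_inj_on_le) (auto simp: finite_saw)
  then show ?thesis by (simp add: card_cartesian_product c_num_def)
qed

lemma c_num_ge_1: "1 \<le> c_num n"
proof -
  have "saw n (map (\<lambda>i. (int i, 0)) [0..<n + 1])"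
    unfolding saw_def by (auto simp: distinct_map inj_on_def adjacent_def simp del: upt_Suc)
  then show ?thesis unfolding c_num_def using finite_saw
    by (metis (mono_tags) One_nat_def Suc_leI card_gt_0_iff empty_iff mem_Collect_eq)
qed

lemma conn_const_eq_Inf: "conn_const = (INF n\<in>{1..}. root n (real (c_num n)))"
proof -
  have "(\<lambda>n. root n (real (c_num n))) \<longlonglongrightarrow> (INF n\<in>{1..}. root n (real (c_num n)))"
    using c_num_add_le c_num_ge_1
    by (intro submultiplicative_root_tendsto_Inf)
      (simp_all add: of_nat_mult[symmetric] del: of_nat_mult)
  then show ?thesis unfolding conn_const_def by (rule limI)
qed

lemma conn_const_ge_1: "1 \<le> conn_const"
  unfolding conn_const_eq_Inf using c_num_ge_1
  by (intro cINF_greatest) (auto simp: Suc_le_eq)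

lemma conn_const_power_le_c_num:
  assumes "1 \<le> n" shows "conn_const ^ n \<le> real (c_num n)"
proof -
  have "conn_const \<le> root n (real (c_num n))"
    unfolding conn_const_eq_Inf using assms c_num_ge_1
    by (intro cINF_lower bdd_belowI2[of _ 1]) (auto simp: Suc_le_eq)
  then have "conn_const ^ n \<le> root n (real (c_num n)) ^ n"
    using conn_const_ge_1 by (intro power_mono) auto
  then show ?thesis using assms by (simp add: real_root_pow_pos2)
qed

definition starts_leftmost :: "pt list \<Rightarrow> bool" where
  "starts_leftmost w \<longleftrightarrow> (\<forall>p\<in>set w. fst (hd w) \<le> fst p)"

definition ends_rightmost :: "pt list \<Rightarrow> bool" where
  "ends_rightmost w \<longleftrightarrow> (\<forall>p\<in>set w. fst p \<le> fst (last w))"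

definition starts_lowest :: "pt list \<Rightarrow> bool" where
  "starts_lowest w \<longleftrightarrow> (\<forall>p\<in>set w. snd (hd w) \<le> snd p)"

definition ends_highest :: "pt list \<Rightarrow> bool" where
  "ends_highest w \<longleftrightarrow> (\<forall>p\<in>set w. snd p \<le> snd (last w))"

definition max_height :: "pt list \<Rightarrow> int" where
  "max_height w = Max ((\<lambda>i. snd (w ! i)) ` {..<length w})"

definition last_top :: "pt list \<Rightarrow> nat" where
  "last_top w = Max {i. i < length w \<and> snd (w ! i) = max_height w}"

definition depth :: "pt list \<Rightarrow> int" where
  "depth w = max_height w - Min ((\<lambda>i. snd (w ! i)) ` {last_top w..<length w})"

definition reflect_height :: "int \<Rightarrow> pt \<Rightarrow> pt" where
  "reflect_height h p = (fst p, 2 * h - snd p)"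

definition unfold_walk :: "pt list \<Rightarrow> pt list" where
  "unfold_walk w = map (\<lambda>i. if i \<le> last_top w then w ! i
     else reflect_height (max_height w) (w ! i)) [0..<length w]"

lemma reflect_height_reflect_height [simp]: "reflect_height h (reflect_height h p) = p"
  by (simp add: reflect_height_def)

lemma fst_reflect_height [simp]: "fst (reflect_height h p) = fst p"
  and snd_reflect_height [simp]: "snd (reflect_height h p) = 2 * h - snd p"
  by (simp_all add: reflect_height_def)

lemma adjacent_reflect_height [simp]:
  "adjacent (reflect_height h p) (reflect_height h q) \<longleftrightarrow> adjacent p q"
  by (simp add: adjacent_def abs_minus_commute)

lemma reflect_height_fixed: "snd p = h \<Longrightarrow> reflect_height h p = p"
  by (cases p) (simp add: reflect_height_def)

lemma length_unfold_walk [simp]: "length (unfold_walk w) = length w"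
  by (simp add: unfold_walk_def)

lemma unfold_walk_eq_Nil_iff [simp]: "unfold_walk w = [] \<longleftrightarrow> w = []"
  by (simp add: unfold_walk_def)

lemma nth_unfold_walk: "i < length w \<Longrightarrow>
    unfold_walk w ! i = (if i \<le> last_top w then w ! i else reflect_height (max_height w) (w ! i))"
  by (simp add: unfold_walk_def)

context
  fixes w :: "pt list"
  assumes nonempty: "w \<noteq> []"
begin

lemma height_le_max_height: "i < length w \<Longrightarrow> snd (w ! i) \<le> max_height w"
  unfolding max_height_def by (intro Max_ge) auto

lemma snd_le_max_height: "p \<in> set w \<Longrightarrow> snd p \<le> max_height w"
  by (metis in_set_conv_nth height_le_max_height)

lemma last_top_less: "last_top w < length w"
  and height_last_top: "snd (w ! last_top w) = max_height w"
proof -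
  have "max_height w \<in> (\<lambda>i. snd (w ! i)) ` {..<length w}"
    unfolding max_height_def using nonempty by (intro Max_in) auto
  then have "last_top w \<in> {i. i < length w \<and> snd (w ! i) = max_height w}"
    unfolding last_top_def by (intro Max_in) auto
  then show "last_top w < length w" "snd (w ! last_top w) = max_height w" by auto
qed

lemma height_after_last_top: "last_top w < i \<Longrightarrow> i < length w \<Longrightarrow> snd (w ! i) < max_height w"
proof -
  assume i: "last_top w < i" "i < length w"
  have "snd (w ! i) \<noteq> max_height w"
  proof
    assume "snd (w ! i) = max_height w"
    then have "i \<le> last_top w" unfolding last_top_def using i by (intro Max_ge) auto
    then show False using i by simp
  qed
  then show ?thesis using height_le_max_height[OF i(2)] by simp
qed

lemma max_height_minus_depth_le:
  "last_top w \<le> i \<Longrightarrow> i < length w \<Longrightarrow> max_height w - depth w \<le> snd (w ! i)"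
  unfolding depth_def by (auto intro!: Min_le)

lemma depth_attained: "\<exists>i. last_top w \<le> i \<and> i < length w \<and> snd (w ! i) = max_height w - depth w"
proof -
  let ?heights = "(\<lambda>i. snd (w ! i)) ` {last_top w..<length w}"
  have "Min ?heights \<in> ?heights" using last_top_less by (intro Min_in) auto
  then show ?thesis unfolding depth_def by auto
qed

lemma depth_nonneg: "0 \<le> depth w"
  using max_height_minus_depth_le[OF order.refl last_top_less] height_last_top by simp

lemma depth_eq_0_iff: "depth w = 0 \<longleftrightarrow> last_top w = length w - 1"
proof
  assume "depth w = 0"
  show "last_top w = length w - 1"
  proof (rule ccontr)
    assume "last_top w \<noteq> length w - 1"
    then have "last_top w < Suc (last_top w)" "Suc (last_top w) < length w"
      using last_top_less by auto
    then have "snd (w ! Suc (last_top w)) < max_height w"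
      and "max_height w - depth w \<le> snd (w ! Suc (last_top w))"
      by (auto intro!: height_after_last_top max_height_minus_depth_le)
    then show False using \<open>depth w = 0\<close> by simp
  qed
next
  assume "last_top w = length w - 1"
  moreover obtain i where "last_top w \<le> i" "i < length w" "snd (w ! i) = max_height w - depth w"
    using depth_attained by blast
  ultimately have "i = last_top w" by simp
  then show "depth w = 0" using height_last_top \<open>snd (w ! i) = max_height w - depth w\<close> by simp
qed

lemma last_top_eq_iff_ends_highest: "last_top w = length w - 1 \<longleftrightarrow> ends_highest w"
proof
  assume "last_top w = length w - 1"
  then show "ends_highest w"
    using height_last_top snd_le_max_height nonempty
    by (simp add: ends_highest_def last_conv_nth)
next
  assume "ends_highest w"
  then have "snd (w ! last_top w) \<le> snd (w ! (length w - 1))"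
    using nonempty last_top_less by (simp add: ends_highest_def last_conv_nth)
  then have "snd (w ! (length w - 1)) = max_height w"
    using nonempty height_last_top height_le_max_height[of "length w - 1"] by simp
  then show "last_top w = length w - 1"
    using height_after_last_top[of "length w - 1"] last_top_less nonempty by fastforce
qed

lemma height_unfold_walk_le: "i < length w \<Longrightarrow> snd (unfold_walk w ! i) \<le> max_height w + depth w"
  using height_le_max_height depth_nonneg max_height_minus_depth_le[of i]
  by (fastforce simp: nth_unfold_walk)

lemma height_unfold_walk_attained: "\<exists>i<length w. snd (unfold_walk w ! i) = max_height w + depth w"
proof -
  obtain i where i: "last_top w \<le> i" "i < length w" "snd (w ! i) = max_height w - depth w"
    using depth_attained by blast
  show ?thesis
  proof (cases "i = last_top w")
    case True
    then have "depth w = 0" using i height_last_top by simp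
    then show ?thesis using True i height_last_top by (auto simp: nth_unfold_walk)
  next
    case False
    then show ?thesis using i by (intro exI[of _ i]) (simp add: nth_unfold_walk)
  qed
qed

text \<open>After the last highest point the unfolded walk stays strictly above the old
  maximal height, and up to it never exceeds it; so the reflection point can be read
  off the unfolded walk.\<close>
lemma last_top_eq_unfold_walk:
  "last_top w = Max {i. i < length w \<and> snd (unfold_walk w ! i) \<le> max_height w}"
proof (rule sym, rule Max_eqI)
  show "last_top w \<in> {i. i < length w \<and> snd (unfold_walk w ! i) \<le> max_height w}"
    using last_top_less height_last_top by (simp add: nth_unfold_walk)
  show "i \<le> last_top w" if "i \<in> {i. i < length w \<and> snd (unfold_walk w ! i) \<le> max_height w}" for i
    using that height_after_last_top[of i] by (force simp: nth_unfold_walk split: if_splits)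
qed simp

end

lemma unfold_walk_inj:
  assumes "w \<noteq> []" "v \<noteq> []" "length w = length v" "max_height w = max_height v"
    and "unfold_walk w = unfold_walk v"
  shows "w = v"
proof (rule nth_equalityI)
  have "last_top w = last_top v"
    using assms by (simp add: last_top_eq_unfold_walk)
  then show "w ! i = v ! i" if "i < length w" for i
    using that assms nth_unfold_walk[of i w] nth_unfold_walk[of i v]
    by (metis reflect_height_reflect_height)
qed (fact assms(3))

lemma max_height_unfold_walk:
  assumes "w \<noteq> []" shows "max_height (unfold_walk w) = max_height w + depth w"
proof (rule antisym)
  show "max_height (unfold_walk w) \<le> max_height w + depth w"
    unfolding max_height_def[of "unfold_walk w"] using assms
    by (intro Max.boundedI) (auto intro: height_unfold_walk_le)
  obtain i where "i < length w" "snd (unfold_walk w ! i) = max_height w + depth w"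
    using height_unfold_walk_attained[OF assms] by blast
  then show "max_height w + depth w \<le> max_height (unfold_walk w)"
    unfolding max_height_def[of "unfold_walk w"]
    by (intro Max_ge_iff[THEN iffD2]) (auto intro!: bexI[of _ i])
qed

lemma depth_unfold_walk_less:
  assumes "w \<noteq> []" "0 < depth w" shows "depth (unfold_walk w) < depth w"
proof -
  let ?u = "unfold_walk w"
  have u: "?u \<noteq> []" using assms(1) by simp
  have "last_top w < last_top ?u"
  proof (rule ccontr)
    assume "\<not> last_top w < last_top ?u"
    moreover have "snd (?u ! last_top ?u) = max_height w + depth w"
      using height_last_top[OF u] max_height_unfold_walk[OF assms(1)] by simp
    moreover have "last_top ?u < length w" using last_top_less[OF u] by simp
    ultimately show False
      using assms height_le_max_height[OF assms(1), of "last_top ?u"] by (simp add: nth_unfold_walk)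
  qed
  obtain j where "last_top ?u \<le> j" "j < length w" "snd (?u ! j) = max_height ?u - depth ?u"
    using depth_attained[OF u] by auto
  moreover have "snd (w ! j) < max_height w"
    using \<open>last_top w < last_top ?u\<close> calculation by (intro height_after_last_top[OF assms(1)]) auto
  ultimately have "max_height w < max_height ?u - depth ?u"
    using \<open>last_top w < last_top ?u\<close> by (simp add: nth_unfold_walk)
  then show ?thesis using max_height_unfold_walk[OF assms(1)] by simp
qed

lemma map_fst_unfold_walk: "map fst (unfold_walk w) = map fst w"
  by (rule nth_equalityI) (simp_all add: nth_unfold_walk)

lemma hd_unfold_walk: "w \<noteq> [] \<Longrightarrow> hd (unfold_walk w) = hd w"
  by (simp add: hd_conv_nth nth_unfold_walk)

lemma starts_leftmost_iff: "starts_leftmost w \<longleftrightarrow> (\<forall>x\<in>set (map fst w). hd (map fst w) \<le> x)"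
  by (cases w) (auto simp: starts_leftmost_def)

lemma ends_rightmost_iff: "ends_rightmost w \<longleftrightarrow> (\<forall>x\<in>set (map fst w). x \<le> last (map fst w))"
  by (cases w rule: rev_cases) (auto simp: ends_rightmost_def)

lemma unfold_walk_starts_leftmost: "starts_leftmost (unfold_walk w) \<longleftrightarrow> starts_leftmost w"
  by (simp only: starts_leftmost_iff map_fst_unfold_walk)

lemma unfold_walk_ends_rightmost: "ends_rightmost (unfold_walk w) \<longleftrightarrow> ends_rightmost w"
  by (simp only: ends_rightmost_iff map_fst_unfold_walk)

lemma unfold_walk_starts_lowest:
  assumes "w \<noteq> []" "starts_lowest w" shows "starts_lowest (unfold_walk w)"
  unfolding starts_lowest_def
proof
  fix p assume "p \<in> set (unfold_walk w)"
  then obtain i where i: "i < length w" "p = unfold_walk w ! i" by (auto simp: in_set_conv_nth)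
  have "snd (hd w) \<le> snd (w ! i)" using assms i by (simp add: starts_lowest_def)
  moreover have "snd (hd w) \<le> max_height w"
    using assms(1) by (intro snd_le_max_height) simp_all
  moreover have "last_top w < i \<Longrightarrow> snd (w ! i) < max_height w"
    using height_after_last_top[OF assms(1)] i by simp
  ultimately show "snd (hd (unfold_walk w)) \<le> snd p"
    using i by (auto simp: nth_unfold_walk hd_unfold_walk[OF assms(1)])
qed

lemma saw_unfold_walk:
  assumes "saw n w" shows "saw n (unfold_walk w)"
proof -
  have w: "w \<noteq> []" using assms by (rule saw_nonempty)
  note nth = nth_unfold_walk[of _ w]
  have "unfold_walk w ! i \<noteq> unfold_walk w ! j"
    if ij: "i < length w" "j < length w" "i \<le> last_top w" "last_top w < j" for i j
  proof -
    have "snd (w ! i) \<le> max_height w" "snd (w ! j) < max_height w"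
      using ij height_le_max_height[OF w] height_after_last_top[OF w] by auto
    then show ?thesis using ij by (auto simp: nth)
  qed
  moreover have "w ! i \<noteq> w ! j" if "i < length w" "j < length w" "i \<noteq> j" for i j
    using assms that by (simp add: saw_def nth_eq_iff_index_eq)
  ultimately have "distinct (unfold_walk w)"
    unfolding distinct_conv_nth
    by (simp add: nth) (metis linorder_not_le reflect_height_reflect_height)
  moreover have "adjacent (unfold_walk w ! i) (unfold_walk w ! Suc i)" if "i < n" for i
  proof -
    have adj: "adjacent (w ! i) (w ! Suc i)" and len: "Suc i < length w"
      using assms that by (auto simp: saw_def)
    have "reflect_height (max_height w) (w ! last_top w) = w ! last_top w"
      using height_last_top[OF w] by (simp add: reflect_height_fixed)
    then show ?thesis
      using adj len adjacent_reflect_height[of "max_height w" "w ! i" "w ! Suc i"]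
      by (cases "i = last_top w") (auto simp: nth)
  qed
  moreover have "unfold_walk w ! 0 = (0, 0)" using assms by (simp add: nth saw_def)
  ultimately show ?thesis using assms by (simp add: saw_def)
qed

text \<open>The number of partitions of an integer at most r into distinct parts with
  largest part d (the largest part of the empty partition being 0).\<close>
fun distinct_parts_count :: "nat \<Rightarrow> nat \<Rightarrow> nat" where
  "distinct_parts_count r 0 = 1"
| "distinct_parts_count r (Suc d) =
     (if Suc d \<le> r then (\<Sum>d'<Suc d. distinct_parts_count (r - Suc d) d') else 0)"

lemma sum_power_prod_one_plus_power:
  fixes x :: real
  assumes "1 \<le> d"
  shows "(\<Sum>d'<d. x ^ d' * (\<Prod>k\<in>{1..<d'}. 1 + x ^ k)) = (\<Prod>k\<in>{1..<d}. 1 + x ^ k)"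
  using assms
proof (induction d rule: dec_induct)
  case (step d)
  then show ?case by (simp add: atLeastLessThanSuc algebra_simps)
qed simp

lemma distinct_parts_count_le:
  fixes x :: real
  assumes "0 < x" "x < 1"
  shows "real (distinct_parts_count r d) \<le> (1 / x) ^ r * x ^ d * (\<Prod>k\<in>{1..<d}. 1 + x ^ k)"
proof (induction d arbitrary: r rule: less_induct)
  case (less d)
  have prod_nonneg: "0 \<le> (\<Prod>k\<in>{1..<d}. 1 + x ^ k)" using assms by (intro prod_nonneg) simp
  show ?case
  proof (cases d)
    case (Suc d0)
    show ?thesis
    proof (cases "d \<le> r")
      case True
      have "real (distinct_parts_count r d) = (\<Sum>d'<d. real (distinct_parts_count (r - d) d'))"
        using Suc True by simp
      also have "\<dots> \<le> (\<Sum>d'<d. (1 / x) ^ (r - d) * x ^ d' * (\<Prod>k\<in>{1..<d'}. 1 + x ^ k))"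
        by (intro sum_mono less.IH) auto
      also have "\<dots> = (1 / x) ^ (r - d) * (\<Sum>d'<d. x ^ d' * (\<Prod>k\<in>{1..<d'}. 1 + x ^ k))"
        by (simp add: sum_distrib_left mult.assoc)
      also have "\<dots> = (1 / x) ^ (r - d) * (\<Prod>k\<in>{1..<d}. 1 + x ^ k)"
        using Suc by (subst sum_power_prod_one_plus_power) auto
      also have "(1 / x) ^ (r - d) = (1 / x) ^ r * x ^ d"
        using True assms by (simp add: power_diff field_simps)
      finally show ?thesis .
    qed (use Suc assms prod_nonneg in simp)
  qed (use assms in simp)
qed

lemma prod_one_plus_power_le_exp:
  fixes x :: real
  assumes "0 < x" "x < 1"
  shows "(\<Prod>k\<in>{1..<d}. 1 + x ^ k) \<le> exp (1 / (1 - x))"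
proof -
  have "(\<Prod>k\<in>{1..<d}. 1 + x ^ k) \<le> (\<Prod>k\<in>{1..<d}. exp (x ^ k))"
    using assms by (intro prod_mono) auto
  also have "\<dots> = exp (\<Sum>k\<in>{1..<d}. x ^ k)" by (simp add: exp_sum)
  also have "(\<Sum>k\<in>{1..<d}. x ^ k) \<le> (\<Sum>k<d. x ^ k)"
    using assms by (intro sum_mono2) auto
  also have "\<dots> = (1 - x ^ d) / (1 - x)" using assms by (simp add: sum_gp_strict)
  also have "\<dots> \<le> 1 / (1 - x)" using assms by (intro divide_right_mono) auto
  finally show ?thesis by simp
qed

lemma distinct_parts_count_le_exp:
  assumes "r \<le> n"
  shows "real (distinct_parts_count r d) \<le> exp (2 * sqrt (real n + 1) + 1)"
proof -
  define s where "s = sqrt (real n + 1)"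
  have s1: "1 \<le> s" and ss: "s * s = real n + 1" unfolding s_def by simp_all
  define x where "x = exp (- (1 / s))"
  have x: "0 < x" "x < 1" using s1 by (auto simp: x_def)
  have "real (distinct_parts_count r d) \<le> (1 / x) ^ r * x ^ d * (\<Prod>k\<in>{1..<d}. 1 + x ^ k)"
    by (rule distinct_parts_count_le[OF x])
  also have "\<dots> \<le> (1 / x) ^ n * 1 * exp (1 / (1 - x))"
    using assms x prod_one_plus_power_le_exp[OF x, of d]
    by (intro mult_mono power_increasing) (auto simp: power_le_one intro: prod_nonneg)
  also have "(1 / x) ^ n = exp (real n / s)"
    unfolding x_def by (simp add: exp_minus exp_of_nat_mult[symmetric] field_simps)
  also have "real n / s \<le> s" using s1 ss by (simp add: divide_le_eq)
  also have "1 / (1 - x) \<le> s + 1"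
  proof -
    have "x * (1 + 1 / s) \<le> 1"
      using exp_ge_add_one_self[of "1 / s"] s1 by (simp add: x_def exp_minus field_simps)
    then show ?thesis using s1 x by (simp add: field_simps)
  qed
  finally have "real (distinct_parts_count r d) \<le> exp s * exp (s + 1)" by (simp add: mult_mono)
  then show ?thesis by (simp add: s_def exp_add[symmetric])
qed

lemma saw_height_bounds:
  assumes "saw n w"
  shows "0 \<le> max_height w" "max_height w \<le> int n" "depth w \<le> 2 * int n"
proof -
  have w: "w \<noteq> []" and len: "length w = n + 1" using assms by (auto simp: saw_def)
  have bound: "\<bar>snd (w ! i)\<bar> \<le> int n" if "i < length w" for i
    using saw_norm_le[OF assms, of i] that len by simp
  show "0 \<le> max_height w"
    using height_le_max_height[OF w, of 0] assms w by (simp add: saw_def)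
  show "max_height w \<le> int n"
    using height_last_top[OF w] bound[OF last_top_less[OF w]] by simp
  obtain i where "i < length w" "snd (w ! i) = max_height w - depth w"
    using depth_attained[OF w] by blast
  then show "depth w \<le> 2 * int n" using bound[of i] \<open>max_height w \<le> int n\<close> by simp
qed

definition unfold_closed :: "pt list set \<Rightarrow> bool" where
  "unfold_closed T \<longleftrightarrow> (\<forall>w\<in>T. 0 < depth w \<longrightarrow> unfold_walk w \<in> T)"

lemma card_depth_Suc_le:
  assumes T: "T \<subseteq> {w. saw n w}" "unfold_closed T"
  shows "card {w\<in>T. max_height w = M \<and> depth w = int (Suc d)}
    \<le> (\<Sum>d'\<le>d. card {w\<in>T. max_height w = M + int (Suc d) \<and> depth w = int d'})"
proof -
  let ?S = "{w\<in>T. max_height w = M \<and> depth w = int (Suc d)}"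
  let ?S' = "\<lambda>d'. {w\<in>T. max_height w = M + int (Suc d) \<and> depth w = int d'}"
  have "inj_on unfold_walk ?S"
  proof (rule inj_onI)
    fix w v assume w: "w \<in> ?S" and v: "v \<in> ?S" and eq: "unfold_walk w = unfold_walk v"
    have "saw n w" "saw n v" using w v T(1) by auto
    then show "w = v"
      using unfold_walk_inj[OF saw_nonempty saw_nonempty _ _ eq] w v by (simp add: saw_length)
  qed
  moreover have "unfold_walk w \<in> (\<Union>d'\<le>d. ?S' d')" if "w \<in> ?S" for w
  proof -
    have w: "w \<in> T" "max_height w = M" "depth w = int (Suc d)" using that by auto
    then have "saw n w" using T(1) by auto
    then have ne: "w \<noteq> []" by (rule saw_nonempty)
    let ?u = "unfold_walk w"
    have "depth ?u < int (Suc d)" using w depth_unfold_walk_less[OF ne] by simp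
    moreover have "0 \<le> depth ?u" using ne by (simp add: depth_nonneg)
    moreover have "?u \<in> T" using w T(2) by (simp add: unfold_closed_def)
    moreover have "max_height ?u = M + int (Suc d)" using w max_height_unfold_walk[OF ne] by simp
    ultimately have "?u \<in> ?S' (nat (depth ?u))" "nat (depth ?u) \<in> {..d}" by auto
    then show ?thesis by blast
  qed
  moreover have "finite (\<Union>d'\<le>d. ?S' d')" using T(1) by (intro finite_subset_saw) auto
  ultimately have "card ?S \<le> card (\<Union>d'\<le>d. ?S' d')"
    by (intro card_inj_on_le) auto
  also have "\<dots> \<le> (\<Sum>d'\<le>d. card (?S' d'))" by (rule card_UN_le) simp
  finally show ?thesis .
qed

lemma card_depth_le_distinct_parts_count:
  assumes T: "T \<subseteq> {w. saw n w}" "unfold_closed T"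
  shows "card {w\<in>T. max_height w = M \<and> depth w = int d}
    \<le> distinct_parts_count (nat (int n - M)) d * card {w\<in>T. ends_highest w}"
proof (induction d arbitrary: M rule: less_induct)
  case (less d)
  let ?E = "{w\<in>T. ends_highest w}"
  let ?S = "\<lambda>M d. {w\<in>T. max_height w = M \<and> depth w = int d}"
  show ?case
  proof (cases d)
    case 0
    have "?S M d \<subseteq> ?E"
    proof
      fix w assume w: "w \<in> ?S M d"
      then have "w \<noteq> []" using T(1) saw_nonempty by blast
      then show "w \<in> ?E" using w 0 depth_eq_0_iff last_top_eq_iff_ends_highest by simp
    qed
    then show ?thesis using 0 T(1) by (simp add: card_mono finite_subset_saw)
  next
    case (Suc d0)
    show ?thesis
    proof (cases "M + int d \<le> int n")
      case True
      have "card (?S M d) \<le> (\<Sum>d'\<le>d0. card (?S (M + int d) d'))"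
        using card_depth_Suc_le[OF T] Suc by simp
      also have "\<dots> \<le> (\<Sum>d'\<le>d0. distinct_parts_count (nat (int n - (M + int d))) d' * card ?E)"
        using Suc by (intro sum_mono less.IH) auto
      also have "\<dots> = distinct_parts_count (nat (int n - M)) d * card ?E"
      proof -
        have "d \<le> nat (int n - M)" "nat (int n - (M + int d)) = nat (int n - M) - d"
          using True by linarith+
        then show ?thesis using Suc by (simp add: sum_distrib_right lessThan_Suc_atMost)
      qed
      finally show ?thesis .
    next
      case False
      have bound: "max_height w \<le> int n" if "w \<in> T" for w
        using that T(1) saw_height_bounds(2) by blast
      have empty: "?S (M + int d) d' = {}" for d' using False by (auto dest!: bound)
      have "card (?S M d) \<le> (\<Sum>d'\<le>d0. card (?S (M + int d) d'))"
        using card_depth_Suc_le[OF T] Suc by simp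
      also have "\<dots> = 0" by (simp only: empty card.empty sum.neutral_const)
      finally show ?thesis by simp
    qed
  qed
qed

definition unfolding_factor :: "nat \<Rightarrow> real" where
  "unfolding_factor n = real ((n + 1) * (2 * n + 1)) * exp (2 * sqrt (real n + 1) + 1)"

lemma unfolding_factor_pos: "0 < unfolding_factor n"
  unfolding unfolding_factor_def by (intro mult_pos_pos) (auto simp: add_pos_nonneg)

lemma card_le_sum_height_depth:
  assumes "T \<subseteq> {w. saw n w}"
  shows "card T \<le> (\<Sum>M\<le>n. \<Sum>d\<le>2 * n. card {w\<in>T. max_height w = int M \<and> depth w = int d})"
proof -
  let ?S = "\<lambda>M d. {w\<in>T. max_height w = int M \<and> depth w = int d}"
  have "T \<subseteq> (\<Union>M\<le>n. \<Union>d\<le>2 * n. ?S M d)"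
  proof
    fix w assume w: "w \<in> T"
    then have "saw n w" using assms by blast
    note bounds = saw_height_bounds[OF this] depth_nonneg[OF saw_nonempty[OF this]]
    then have "nat (max_height w) \<le> n" "nat (depth w) \<le> 2 * n"
      and "w \<in> ?S (nat (max_height w)) (nat (depth w))"
      using w by auto
    then show "w \<in> (\<Union>M\<le>n. \<Union>d\<le>2 * n. ?S M d)" by blast
  qed
  moreover have "finite (\<Union>M\<le>n. \<Union>d\<le>2 * n. ?S M d)"
    using assms by (intro finite_subset_saw) auto
  ultimately have "card T \<le> card (\<Union>M\<le>n. \<Union>d\<le>2 * n. ?S M d)" by (rule card_mono[rotated])
  also have "\<dots> \<le> (\<Sum>M\<le>n. card (\<Union>d\<le>2 * n. ?S M d))" by (rule card_UN_le) simp
  also have "\<dots> \<le> (\<Sum>M\<le>n. \<Sum>d\<le>2 * n. card (?S M d))" by (intro sum_mono card_UN_le) simp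
  finally show ?thesis .
qed

lemma card_le_unfolding_factor:
  assumes T: "T \<subseteq> {w. saw n w}" "unfold_closed T"
  shows "real (card T) \<le> unfolding_factor n * real (card {w\<in>T. ends_highest w})"
proof -
  let ?E = "{w\<in>T. ends_highest w}"
  let ?S = "\<lambda>M d. {w\<in>T. max_height w = int M \<and> depth w = int d}"
  let ?K = "exp (2 * sqrt (real n + 1) + 1)"
  have "real (card T) \<le> (\<Sum>M\<le>n. \<Sum>d\<le>2 * n. real (card (?S M d)))"
    using card_le_sum_height_depth[OF T(1)] by (simp only: of_nat_le_iff of_nat_sum[symmetric])
  also have "\<dots> \<le> (\<Sum>M\<le>n. \<Sum>d\<le>2 * n. ?K * real (card ?E))"
  proof (intro sum_mono)
    fix M d assume "M \<in> {..n}"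
    have "real (card (?S M d)) \<le> real (distinct_parts_count (n - M) d) * real (card ?E)"
      using card_depth_le_distinct_parts_count[OF T, of "int M" d] \<open>M \<in> {..n}\<close>
      by (simp del: of_nat_mult add: of_nat_mult[symmetric] nat_diff_distrib)
    also have "\<dots> \<le> ?K * real (card ?E)"
      by (intro mult_right_mono distinct_parts_count_le_exp) auto
    finally show "real (card (?S M d)) \<le> ?K * real (card ?E)" .
  qed
  also have "\<dots> = unfolding_factor n * real (card ?E)"
    by (simp add: unfolding_factor_def algebra_simps)
  finally show ?thesis .
qed

lemma card_saw_le_unfolding_factor:
  assumes "\<And>w. saw n w \<Longrightarrow> P w \<Longrightarrow> P (unfold_walk w)"
  shows "real (card {w. saw n w \<and> P w})
    \<le> unfolding_factor n * real (card {w. saw n w \<and> P w \<and> ends_highest w})"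
proof -
  have "unfold_closed {w. saw n w \<and> P w}"
    using assms by (simp add: unfold_closed_def saw_unfold_walk)
  then have "real (card {w. saw n w \<and> P w})
      \<le> unfolding_factor n * real (card {w \<in> {w. saw n w \<and> P w}. ends_highest w})"
    by (intro card_le_unfolding_factor) auto
  then show ?thesis by (simp add: conj_assoc)
qed

definition reverse_walk :: "pt list \<Rightarrow> pt list" where
  "reverse_walk w = map (\<lambda>p. last w - p) (rev w)"

lemma saw_reverse_walk:
  assumes "saw n w" shows "saw n (reverse_walk w)"
proof -
  have "w \<noteq> []" using assms by (rule saw_nonempty)
  have "inj (\<lambda>p. last w - p)" by (rule injI) simp
  moreover have "successively adjacent (rev w)"
    using assms by (auto simp: saw_iff_successively intro: successively_mono adjacent_sym)
  ultimately show ?thesis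
    using assms \<open>w \<noteq> []\<close>
    by (simp add: saw_iff_successively reverse_walk_def distinct_map inj_on_subset
        successively_map hd_rev[symmetric] hd_conv_nth)
qed

lemma reverse_walk_reverse_walk:
  assumes "saw n w" shows "reverse_walk (reverse_walk w) = w"
proof -
  have "w \<noteq> []" "hd w = 0" using assms by (simp_all add: saw_nonempty hd_saw)
  then have "last (reverse_walk w) = last w" by (simp add: reverse_walk_def last_map last_rev)
  then show ?thesis by (simp add: reverse_walk_def rev_map comp_def)
qed

lemma card_saw_reverse_walk:
  assumes "\<And>w. saw n w \<Longrightarrow> P (reverse_walk w) \<longleftrightarrow> Q w"
  shows "card {w. saw n w \<and> Q w} = card {w. saw n w \<and> P w}"
proof (rule bij_betw_same_card, rule bij_betw_byWitness[of _ reverse_walk])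
  show "\<forall>w\<in>{w. saw n w \<and> Q w}. reverse_walk (reverse_walk w) = w"
    and "\<forall>w\<in>{w. saw n w \<and> P w}. reverse_walk (reverse_walk w) = w"
    by (auto simp: reverse_walk_reverse_walk)
  show "reverse_walk ` {w. saw n w \<and> Q w} \<subseteq> {w. saw n w \<and> P w}"
    using assms by (auto simp: saw_reverse_walk)
  show "reverse_walk ` {w. saw n w \<and> P w} \<subseteq> {w. saw n w \<and> Q w}"
  proof clarify
    fix v assume "saw n v" "P v"
    then show "saw n (reverse_walk v) \<and> Q (reverse_walk v)"
      using assms[OF saw_reverse_walk[OF \<open>saw n v\<close>]]
      by (simp add: saw_reverse_walk reverse_walk_reverse_walk)
  qed
qed

lemma saw_map_swap: "saw n w \<Longrightarrow> saw n (map prod.swap w)"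
  by (simp add: saw_iff_successively distinct_map successively_map zero_prod_def)

lemma card_saw_swap:
  assumes "\<And>w. saw n w \<Longrightarrow> P (map prod.swap w) \<longleftrightarrow> Q w"
  shows "card {w. saw n w \<and> Q w} = card {w. saw n w \<and> P w}"
proof (rule bij_betw_same_card, rule bij_betw_byWitness[of _ "map prod.swap"])
  show "\<forall>w\<in>{w. saw n w \<and> Q w}. map prod.swap (map prod.swap w) = w"
    and "\<forall>w\<in>{w. saw n w \<and> P w}. map prod.swap (map prod.swap w) = w"
    by (simp_all add: comp_def)
  show "map prod.swap ` {w. saw n w \<and> Q w} \<subseteq> {w. saw n w \<and> P w}"
    using assms by (auto simp: saw_map_swap)
  show "map prod.swap ` {w. saw n w \<and> P w} \<subseteq> {w. saw n w \<and> Q w}"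
    using assms[of "map prod.swap _"] by (auto simp: saw_map_swap comp_def)
qed

lemma reverse_walk_predicates:
  assumes "w \<noteq> []"
  shows "starts_lowest (reverse_walk w) \<longleftrightarrow> ends_highest w"
    and "ends_highest (reverse_walk w) \<longleftrightarrow> starts_lowest w"
    and "starts_leftmost (reverse_walk w) \<longleftrightarrow> ends_rightmost w"
    and "ends_rightmost (reverse_walk w) \<longleftrightarrow> starts_leftmost w"
  using assms
  by (simp_all add: reverse_walk_def starts_lowest_def ends_highest_def starts_leftmost_def
      ends_rightmost_def hd_map last_map hd_rev last_rev)

lemma swap_predicates:
  assumes "w \<noteq> []"
  shows "starts_leftmost (map prod.swap w) \<longleftrightarrow> starts_lowest w"
    and "ends_rightmost (map prod.swap w) \<longleftrightarrow> ends_highest w"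
  using assms
  by (simp_all add: starts_lowest_def ends_highest_def starts_leftmost_def ends_rightmost_def
      hd_map last_map)

definition corner_walks :: "nat \<Rightarrow> pt list set" where
  "corner_walks n = {w. saw n w \<and> starts_leftmost w \<and> ends_rightmost w
     \<and> starts_lowest w \<and> ends_highest w}"

lemma c_num_le_corner_walks:
  "real (c_num n) \<le> unfolding_factor n ^ 4 * real (card (corner_walks n))"
proof -
  let ?F = "unfolding_factor n"
  let ?card = "\<lambda>P. real (card {w. saw n w \<and> P w})"
  let ?horizontal = "\<lambda>w. starts_leftmost w \<and> ends_rightmost w"
  have "real (c_num n) \<le> ?F * ?card ends_highest"
    using card_saw_le_unfolding_factor[of n "\<lambda>_. True"] by (simp add: c_num_def)
  also have "?card ends_highest = ?card starts_lowest"
    by (subst card_saw_reverse_walk[of n starts_lowest])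
      (simp_all add: reverse_walk_predicates saw_nonempty)
  also have "?card starts_lowest \<le> ?F * ?card (\<lambda>w. starts_lowest w \<and> ends_highest w)"
    using card_saw_le_unfolding_factor[of n starts_lowest]
    by (simp add: unfold_walk_starts_lowest saw_nonempty)
  also have "?card (\<lambda>w. starts_lowest w \<and> ends_highest w) = ?card ?horizontal"
    by (subst card_saw_swap[of n ?horizontal]) (simp_all add: swap_predicates saw_nonempty)
  also have "\<dots> \<le> ?F * ?card (\<lambda>w. ?horizontal w \<and> ends_highest w)"
    using card_saw_le_unfolding_factor[of n ?horizontal]
    by (simp add: unfold_walk_starts_leftmost unfold_walk_ends_rightmost)
  also have "?card (\<lambda>w. ?horizontal w \<and> ends_highest w)
      = ?card (\<lambda>w. ?horizontal w \<and> starts_lowest w)"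
    by (subst card_saw_reverse_walk[of n "\<lambda>w. ?horizontal w \<and> starts_lowest w"])
      (auto simp: reverse_walk_predicates saw_nonempty)
  also have "\<dots> \<le> ?F * real (card (corner_walks n))"
    using card_saw_le_unfolding_factor[of n "\<lambda>w. ?horizontal w \<and> starts_lowest w"]
    by (simp add: corner_walks_def unfold_walk_starts_leftmost unfold_walk_ends_rightmost
        unfold_walk_starts_lowest saw_nonempty conj_assoc)
  finally show ?thesis using unfolding_factor_pos[of n]
    by (simp add: mult_left_mono power4_eq_xxxx mult.assoc)
qed

lemma corner_walk_in_box:
  assumes "w \<in> corner_walks n" "p \<in> set w"
  shows "0 \<le> fst p \<and> fst p \<le> fst (last w) \<and> 0 \<le> snd p \<and> snd p \<le> snd (last w)"
proof -
  have "hd w = 0" using assms(1) hd_saw by (auto simp: corner_walks_def)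
  then show ?thesis
    using assms by (simp add: corner_walks_def starts_leftmost_def ends_rightmost_def
        starts_lowest_def ends_highest_def)
qed

definition corner_walks_to :: "nat \<Rightarrow> int \<Rightarrow> int \<Rightarrow> pt list set" where
  "corner_walks_to n a b = {w \<in> corner_walks n. last w = (a, b)}"

lemma corner_walks_to_in_box:
  assumes "w \<in> corner_walks_to n a b" "p \<in> set w"
  shows "0 \<le> fst p \<and> fst p \<le> a \<and> 0 \<le> snd p \<and> snd p \<le> b"
  using corner_walk_in_box[of w n p] assms by (simp add: corner_walks_to_def)

lemma corner_walks_to_nonneg:
  assumes "w \<in> corner_walks_to n a b" shows "0 \<le> a" "0 \<le> b"
proof -
  have "saw n w" using assms by (simp add: corner_walks_to_def corner_walks_def)
  then have "last w \<in> set w" by (simp add: saw_nonempty)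
  then show "0 \<le> a" "0 \<le> b"
    using corner_walks_to_in_box[OF assms, of "last w"] assms by (auto simp: corner_walks_to_def)
qed

lemma finite_corner_walks_to: "finite (corner_walks_to n a b)"
  by (rule finite_subset_saw) (auto simp: corner_walks_to_def corner_walks_def)

lemma card_corner_walks_to_swap: "card (corner_walks_to n a b) = card (corner_walks_to n b a)"
proof -
  have "map prod.swap w \<in> corner_walks_to n b a" if "w \<in> corner_walks_to n a b" for a b w
  proof -
    have "w \<noteq> []" using that by (auto simp: corner_walks_to_def corner_walks_def saw_def)
    then show ?thesis
      using that swap_predicates[of w] swap_predicates[of "map prod.swap w"]
      by (auto simp: corner_walks_to_def corner_walks_def saw_map_swap last_map comp_def)
  qed
  then show ?thesis
    by (intro bij_betw_same_card[of "map prod.swap"] bij_betw_byWitness[of _ "map prod.swap"])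
      (auto simp: comp_def)
qed

definition glue :: "pt list \<Rightarrow> pt list \<Rightarrow> pt list" where
  "glue w v = w @ map ((+) (last w)) (tl v)"

lemma set_glue: "set (glue w v) = set w \<union> (+) (last w) ` set (tl v)"
  by (simp add: glue_def)

lemma saw_glue:
  assumes w: "saw n w" and v: "saw m v" and disjoint: "set w \<inter> (+) (last w) ` set (tl v) = {}"
  shows "saw (n + m) (glue w v)"
proof -
  have "w \<noteq> []" using w by (rule saw_nonempty)
  have v_eq: "v = 0 # tl v" using v by (rule saw_eq_Cons)
  have "successively adjacent (map ((+) (last w)) v)"
    using v by (simp add: saw_iff_successively successively_map)
  then have "successively adjacent (last w # map ((+) (last w)) (tl v))"
    by (subst (asm) v_eq) simp
  moreover have "distinct (tl v)" using v by (simp add: saw_def distinct_tl)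
  ultimately show ?thesis
    using w v \<open>w \<noteq> []\<close> disjoint
    by (auto simp: saw_iff_successively glue_def successively_append_iff nth_append
        distinct_map successively_Cons)
qed

lemma last_glue: "saw m v \<Longrightarrow> 1 \<le> m \<Longrightarrow> last (glue w v) = last w + last v"
  by (cases v) (auto simp: glue_def saw_def last_map)

lemma squared_walk_glue:
  assumes "1 \<le> n" "w \<in> corner_walks_to n a b" "v \<in> corner_walks_to n b a"
  shows "squared_walk (2 * n) (glue w v)"
proof -
  have w: "saw n w" "last w = (a, b)" and v: "saw n v" "last v = (b, a)"
    using assms(2,3) by (auto simp: corner_walks_to_def corner_walks_def)
  note box_w = corner_walks_to_in_box[OF assms(2)] and box_v = corner_walks_to_in_box[OF assms(3)]
  have "0 \<le> a" "0 \<le> b" using corner_walks_to_nonneg[OF assms(2)] by simp_all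
  have "distinct (0 # tl v)" "set (0 # tl v) = set v"
    using v(1) saw_eq_Cons[OF v(1)] by (metis saw_def)+
  then have v_tl: "0 \<notin> set (tl v)" "set (tl v) \<subseteq> set v" by auto
  text \<open>The first walk lies in the rectangle with corners 0 and (a, b), the translated tail
    of the second one in the quadrant above (a, b), and 0 is not on that tail.\<close>
  have "set w \<inter> (+) (a, b) ` set (tl v) = {}"
  proof (rule ccontr)
    assume "set w \<inter> (+) (a, b) ` set (tl v) \<noteq> {}"
    then obtain p where "p \<in> set (tl v)" "(a, b) + p \<in> set w" by blast
    then have "p = 0" using box_w[of "(a, b) + p"] box_v[of p] v_tl by (auto simp: prod_eq_iff)
    then show False using \<open>p \<in> set (tl v)\<close> v_tl by simp
  qed
  then have saw: "saw (2 * n) (glue w v)" using saw_glue[OF w(1) v(1)] w(2) by (simp add: mult_2)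
  have "glue w v ! (2 * n) = last (glue w v)"
    using saw_length[OF saw] saw_nonempty[OF saw] by (simp add: last_conv_nth)
  also have "\<dots> = (a + b, a + b)" using last_glue[OF v(1) assms(1)] w(2) v(2) by simp
  finally have "glue w v ! (2 * n) = (a + b, a + b)" .
  moreover have "0 \<le> fst p \<and> fst p \<le> a + b \<and> 0 \<le> snd p \<and> snd p \<le> a + b"
    if p: "p \<in> set (glue w v)" for p
  proof (cases "p \<in> set w")
    case True
    then show ?thesis using box_w[of p] \<open>0 \<le> a\<close> \<open>0 \<le> b\<close> by auto
  next
    case False
    then obtain q where "q \<in> set (tl v)" "p = (a, b) + q"
      using p unfolding set_glue w(2) by blast
    then show ?thesis using box_v[of q] v_tl by auto
  qed
  ultimately show ?thesis
    unfolding squared_walk_def using saw \<open>0 \<le> a\<close> \<open>0 \<le> b\<close>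
    by (intro conjI exI[of _ "a + b"]) auto
qed

lemma inj_on_glue: "inj_on (\<lambda>(w, v). glue w v) (corner_walks_to n a b \<times> corner_walks_to n' a' b')"
proof (rule inj_onI, clarify)
  fix w v w' v'
  assume "w \<in> corner_walks_to n a b" "v \<in> corner_walks_to n' a' b'"
    and "w' \<in> corner_walks_to n a b" "v' \<in> corner_walks_to n' a' b'"
  then have saws: "saw n w" "saw n w'" "saw n' v" "saw n' v'"
    by (auto simp: corner_walks_to_def corner_walks_def)
  assume "glue w v = glue w' v'"
  then have "w = w'" and tl_eq: "map ((+) (last w)) (tl v) = map ((+) (last w)) (tl v')"
    using saw_length[OF saws(1)] saw_length[OF saws(2)] by (auto simp: glue_def)
  have "tl v = tl v'" using tl_eq by (simp add: inj_map_eq_map)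
  then have "v = v'" using saw_eq_Cons[OF saws(3)] saw_eq_Cons[OF saws(4)] by metis
  then show "w = w' \<and> v = v'" using \<open>w = w'\<close> by simp
qed

lemma finite_squared_walk: "finite {w. squared_walk n w}"
  by (rule finite_subset_saw) (auto simp: squared_walk_def)

lemma card_corner_walks_to_square_le_a_num:
  assumes "1 \<le> n"
  shows "card (corner_walks_to n a b) ^ 2 \<le> a_num (2 * n)"
proof -
  have "card (corner_walks_to n a b) ^ 2 = card (corner_walks_to n a b \<times> corner_walks_to n b a)"
    by (simp add: card_cartesian_product power2_eq_square card_corner_walks_to_swap[of n a b])
  also have "\<dots> \<le> a_num (2 * n)"
    unfolding a_num_def using squared_walk_glue[OF assms]
    by (intro card_inj_on_le[OF inj_on_glue _ finite_squared_walk]) auto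
  finally show ?thesis .
qed

lemma corner_walks_subset_UN:
  "corner_walks n \<subseteq> (\<Union>e\<in>{0..int n} \<times> {0..int n}. corner_walks_to n (fst e) (snd e))"
proof
  fix w assume w: "w \<in> corner_walks n"
  then have "saw n w" by (simp add: corner_walks_def)
  then have "last w = w ! n" "last w \<in> set w"
    using saw_length[of n w] saw_nonempty[of n w] by (simp_all add: last_conv_nth)
  then have "0 \<le> fst (last w)" "0 \<le> snd (last w)"
    and "\<bar>fst (last w)\<bar> + \<bar>snd (last w)\<bar> \<le> int n"
    using corner_walk_in_box[OF w, of "last w"] saw_norm_le[OF \<open>saw n w\<close>, of n] by auto
  then have "last w \<in> {0..int n} \<times> {0..int n}" by (simp add: mem_Times_iff)
  moreover have "w \<in> corner_walks_to n (fst (last w)) (snd (last w))"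
    using w by (simp add: corner_walks_to_def)
  ultimately show "w \<in> (\<Union>e\<in>{0..int n} \<times> {0..int n}. corner_walks_to n (fst e) (snd e))"
    by (rule UN_I)
qed

lemma card_corner_walks_le_corner_walks_to:
  "\<exists>a b. card (corner_walks n) \<le> (n + 1) ^ 2 * card (corner_walks_to n a b)"
proof -
  let ?E = "{0..int n} \<times> {0..int n}" and ?A = "\<lambda>e. corner_walks_to n (fst e) (snd e)"
  have "nat (int n + 1) = n + 1" by simp
  then have card_E: "card ?E = (n + 1) ^ 2"
    by (simp add: card_cartesian_product power2_eq_square del: nat_int_add)
  have "finite ?E" "?E \<noteq> {}" by simp_all
  then obtain e where "card (\<Union>e\<in>?E. ?A e) \<le> card ?E * card (?A e)"
    by (elim exists_card_UN_le_card_mult[THEN bexE])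
  moreover have "card (corner_walks n) \<le> card (\<Union>e\<in>?E. ?A e)"
    by (rule card_mono[OF _ corner_walks_subset_UN]) (simp add: finite_corner_walks_to)
  ultimately have "card (corner_walks n) \<le> (n + 1) ^ 2 * card (?A e)"
    unfolding card_E by (rule order.trans[rotated])
  then show ?thesis by blast
qed

lemma conn_const_power_le_a_num:
  assumes "1 \<le> m"
  shows "conn_const ^ (2 * m)
    \<le> (unfolding_factor m ^ 4 * real ((m + 1) ^ 2)) ^ 2 * real (a_num (2 * m))"
proof -
  let ?C = "unfolding_factor m ^ 4 * real ((m + 1) ^ 2)"
  obtain a b where ab: "card (corner_walks m) \<le> (m + 1) ^ 2 * card (corner_walks_to m a b)"
    using card_corner_walks_le_corner_walks_to by blast
  have "0 \<le> unfolding_factor m" using unfolding_factor_pos[of m] by simp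
  have "conn_const ^ m \<le> real (c_num m)" using assms by (rule conn_const_power_le_c_num)
  also have "\<dots> \<le> unfolding_factor m ^ 4 * real (card (corner_walks m))"
    by (rule c_num_le_corner_walks)
  also have "\<dots> \<le> ?C * real (card (corner_walks_to m a b))"
  proof -
    have "real (card (corner_walks m)) \<le> real ((m + 1) ^ 2) * real (card (corner_walks_to m a b))"
      using ab by (simp only: of_nat_le_iff of_nat_mult[symmetric])
    then show ?thesis using \<open>0 \<le> unfolding_factor m\<close> by (simp add: mult.assoc mult_left_mono)
  qed
  finally have "(conn_const ^ m) ^ 2 \<le> (?C * real (card (corner_walks_to m a b))) ^ 2"
    using conn_const_ge_1 by (intro power_mono) auto
  also have "\<dots> = ?C ^ 2 * real (card (corner_walks_to m a b) ^ 2)"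
    by (simp add: power_mult_distrib)
  also have "\<dots> \<le> ?C ^ 2 * real (a_num (2 * m))"
    using card_corner_walks_to_square_le_a_num[OF assms] by (intro mult_left_mono) auto
  finally show ?thesis by (simp add: power_mult mult.commute)
qed

lemma unfolding_factor_power_le_exp:
  assumes "1 \<le> m"
  shows "(unfolding_factor m ^ 4 * real ((m + 1) ^ 2)) ^ 2 \<le> exp (64 * sqrt (real (2 * m)))"
proof -
  define t where "t = sqrt (real (2 * m))"
  have "1 \<le> t" "t * t = 2 * real m" using assms by (simp_all add: t_def)
  have "2 * real m + 1 \<le> (1 + t) ^ 2"
    using \<open>t * t = 2 * real m\<close> \<open>1 \<le> t\<close> by (simp add: power2_eq_square algebra_simps)
  also have "\<dots> \<le> exp t ^ 2" using \<open>1 \<le> t\<close> by (intro power_mono exp_ge_add_one_self) auto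
  also have "\<dots> = exp (2 * t)" by (simp flip: exp_of_nat_mult)
  finally have lin: "2 * real m + 1 \<le> exp (2 * t)" .
  have "real ((m + 1) * (2 * m + 1)) \<le> exp (2 * t) * exp (2 * t)"
    using lin by (simp only: of_nat_mult of_nat_add of_nat_1) (intro mult_mono; simp)
  moreover have "sqrt (real m + 1) \<le> t" unfolding t_def using assms by simp
  then have "exp (2 * sqrt (real m + 1) + 1) \<le> exp (3 * t)" using \<open>1 \<le> t\<close> by simp
  ultimately have "unfolding_factor m \<le> exp (2 * t) * exp (2 * t) * exp (3 * t)"
    unfolding unfolding_factor_def by (intro mult_mono) auto
  also have "\<dots> = exp (7 * t)" by (simp flip: exp_add)
  finally have "unfolding_factor m ^ 4 * real ((m + 1) ^ 2) \<le> exp (7 * t) ^ 4 * exp (2 * t) ^ 2"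
    using lin unfolding_factor_pos[of m] by (intro mult_mono power_mono) auto
  also have "\<dots> = exp (32 * t)" by (simp flip: exp_of_nat_mult exp_add)
  finally have "(unfolding_factor m ^ 4 * real ((m + 1) ^ 2)) ^ 2 \<le> exp (32 * t) ^ 2"
    using unfolding_factor_pos[of m] by (intro power_mono) auto
  then show ?thesis by (simp add: t_def flip: exp_of_nat_mult)
qed

lemma a_num_0: "a_num 0 = 1"
proof -
  have "{w. squared_walk 0 w} = {[(0, 0)]}"
    by (auto simp: squared_walk_def saw_def length_Suc_conv)
  then show ?thesis by (simp add: a_num_def)
qed

theorem lemma5:
  shows "\<exists>c::real. c > 0 \<and> (\<forall>n::nat. even n \<longrightarrow>
           real (a_num n) \<ge> conn_const ^ n * exp (- c * sqrt (real n)))"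
proof (intro exI[of _ 64] conjI allI impI)
  fix n :: nat assume "even n"
  then obtain m where n: "n = 2 * m" by (auto elim: evenE)
  show "conn_const ^ n * exp (- 64 * sqrt (real n)) \<le> real (a_num n)"
  proof (cases "m = 0")
    case True
    then show ?thesis using n by (simp add: a_num_0)
  next
    case False
    then have "conn_const ^ n \<le> (unfolding_factor m ^ 4 * real ((m + 1) ^ 2)) ^ 2 * real (a_num n)"
      using n conn_const_power_le_a_num[of m] by simp
    also have "\<dots> \<le> exp (64 * sqrt (real n)) * real (a_num n)"
      using n False unfolding_factor_power_le_exp[of m] by (intro mult_right_mono) auto
    finally show ?thesis by (simp add: exp_minus field_simps)
  qed
qed simp

end
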